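(* Let $0<\beta'<\beta<1$. Then $\mathcal{R}_{\mathcal{X}}(\beta')$ satisfies the $\beta$-aggregation condition; in particular, for all $x\in\mathcal{X}$ and all $z'<F_x^{-1}(\beta)$, $$\mathbb{P}\big(Y\in\{y: z'\le f(x,y)\le F_x^{-1}(\beta)\}\cap\mathcal{R}_{\mathcal{X}}(\beta')\big)>0.$$
   Context: Let $(\Omega,\mathcal{F},\mathbb{P})$ be a probability space, $Y$ a random vector in $\mathbb{R}^d$, $\mathcal{X}\subseteq\mathbb{R}^k$ a set of decisions and $f:\mathcal{X}\times\mathbb{R}^d\to\mathbb{R}$ a loss function with $f(x,Y)$ measurable for all $x$. Write $F_x(z)=\mathbb{P}(f(x,Y)\le z)$ and $F_x^{-1}(\gamma)=\inf\{z: F_x(z)\ge\gamma\}$. For $0<\gamma<1$ the $\gamma$-risk region of $x$ is $\mathcal{R}_x(\gamma)=\{y\in\mathbb{R}^d: f(x,y)\ge F_x^{-1}(\gamma)\}$ and $\mathcal{R}_{\mathcal{X}}(\gamma)=\bigcup_{x\in\mathcal{X}}\mathcal{R}_x(\gamma)$. A set $\mathcal{R}$ with $\mathcal{R}_{\mathcal{X}}(\beta)\subseteq\mathcal{R}\subset\mathbb{R}^d$ satisfies the $\beta$-aggregation condition if for all $x\in\mathcal{X}$ and all $z'<F_x^{-1}(\beta)$, $\mathbb{P}\big(Y\in\{y: z'<f(x,y)\le F_x^{-1}(\beta)\}\cap\mathcal{R}\big)>0$. *)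

theory Defs
  imports "HOL-Probability.Probability"
begin

definition loss_cdf :: "'w measure \<Rightarrow> ('w \<Rightarrow> 'y) \<Rightarrow> ('x \<Rightarrow> 'y \<Rightarrow> real) \<Rightarrow> 'x \<Rightarrow> real \<Rightarrow> real" where
  "loss_cdf M Y f x z = measure M {\<omega> \<in> space M. f x (Y \<omega>) \<le> z}"

definition loss_quantile :: "'w measure \<Rightarrow> ('w \<Rightarrow> 'y) \<Rightarrow> ('x \<Rightarrow> 'y \<Rightarrow> real) \<Rightarrow> 'x \<Rightarrow> real \<Rightarrow> real" where
  "loss_quantile M Y f x \<gamma> = Inf {z. loss_cdf M Y f x z \<ge> \<gamma>}"

definition risk_region :: "'w measure \<Rightarrow> ('w \<Rightarrow> 'y) \<Rightarrow> ('x \<Rightarrow> 'y \<Rightarrow> real) \<Rightarrow> 'x \<Rightarrow> real \<Rightarrow> 'y set" where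
  "risk_region M Y f x \<gamma> = {y. f x y \<ge> loss_quantile M Y f x \<gamma>}"

definition risk_region_set :: "'w measure \<Rightarrow> ('w \<Rightarrow> 'y) \<Rightarrow> ('x \<Rightarrow> 'y \<Rightarrow> real) \<Rightarrow> 'x set \<Rightarrow> real \<Rightarrow> 'y set" where
  "risk_region_set M Y f X \<gamma> = (\<Union>x\<in>X. risk_region M Y f x \<gamma>)"

definition aggregation_condition :: "'w measure \<Rightarrow> ('w \<Rightarrow> 'y) \<Rightarrow> ('x \<Rightarrow> 'y \<Rightarrow> real) \<Rightarrow> 'x set \<Rightarrow> real \<Rightarrow> 'y set \<Rightarrow> bool" where
  "aggregation_condition M Y f X \<beta> R \<longleftrightarrow>
     risk_region_set M Y f X \<beta> \<subseteq> R \<and>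
     (\<forall>x\<in>X. \<forall>z'. z' < loss_quantile M Y f x \<beta> \<longrightarrow>
        measure M {\<omega> \<in> space M. Y \<omega> \<in> {y. z' < f x y \<and> f x y \<le> loss_quantile M Y f x \<beta>} \<inter> R} > 0)"

end

theory Submission
  imports Defs
begin

text \<open>
  Quantiles are monotone in the level, which gives the inclusion of risk regions.
  For fixed x, let Q' \<le> Q be the \<beta>'- and \<beta>-quantiles of f(x,Y). Every outcome
  with Q' \<le> f(x,Y) lies in the aggregated region, so it suffices that the band
  z' < f(x,Y) \<le> Q, Q' \<le> f(x,Y) has positive probability. The band covers
  {f(x,Y) \<le> Q}, which has probability at least \<beta>, up to either {f(x,Y) \<le> z'}
  or {f(x,Y) < Q'}; the former has probability below \<beta> because z' < Q, the
  latter at most \<beta>' < \<beta>.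
\<close>

definition lower_quantile :: "real measure \<Rightarrow> real \<Rightarrow> real" where
  "lower_quantile N \<gamma> = Inf {z. \<gamma> \<le> cdf N z}"

context real_distribution
begin

lemma cdf_ge_set_nonempty:
  assumes "g < 1"
  shows "{z. g \<le> cdf M z} \<noteq> {}"
proof -
  have "eventually (\<lambda>z. g < cdf M z) at_top"
    using cdf_lim_at_top_prob assms order_tendstoD(1) by blast
  then obtain a where "\<And>z. a \<le> z \<Longrightarrow> g < cdf M z"
    by (auto simp: eventually_at_top_linorder)
  then show ?thesis by (auto intro!: less_imp_le)
qed

lemma cdf_ge_set_bdd_below:
  assumes "0 < g"
  shows "bdd_below {z. g \<le> cdf M z}"
proof -
  have "eventually (\<lambda>z. cdf M z < g) at_bot"
    using cdf_lim_at_bot assms order_tendstoD(2) by blast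
  then obtain b where "\<And>z. z \<le> b \<Longrightarrow> cdf M z < g"
    by (auto simp: eventually_at_bot_linorder)
  then have "b \<le> z" if "g \<le> cdf M z" for z
    using that by (metis linorder_not_le nle_le)
  then show ?thesis by (auto simp: bdd_below_def)
qed

lemma cdf_less_lower_quantile:
  assumes "0 < g" "z < lower_quantile M g"
  shows "cdf M z < g"
proof (rule ccontr)
  assume "\<not> cdf M z < g"
  then have "lower_quantile M g \<le> z"
    unfolding lower_quantile_def using cdf_ge_set_bdd_below[OF assms(1)]
    by (intro cInf_lower) auto
  with assms(2) show False by simp
qed

text \<open>The infimum is attained by right-continuity of the distribution function.\<close>
lemma cdf_lower_quantile_ge:
  assumes "0 < g" "g < 1"
  shows "g \<le> cdf M (lower_quantile M g)"
proof (rule tendsto_lowerbound)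
  let ?q = "lower_quantile M g"
  show "(cdf M \<longlongrightarrow> cdf M ?q) (at_right ?q)"
    using cdf_is_right_cont by (simp add: continuous_within)
  show "eventually (\<lambda>z. g \<le> cdf M z) (at_right ?q)"
    unfolding eventually_at_right_field
  proof (intro exI[of _ "?q + 1"] conjI allI impI)
    fix z assume "?q < z"
    then obtain s where "g \<le> cdf M s" "s < z"
      using cInf_lessD[OF cdf_ge_set_nonempty[OF assms(2)]]
      unfolding lower_quantile_def by blast
    then show "g \<le> cdf M z" using cdf_nondecreasing[of s z] by simp
  qed simp
qed simp

lemma measure_lessThan_lower_quantile:
  assumes "0 < g"
  shows "measure M {..<lower_quantile M g} \<le> g"
proof (rule tendsto_upperbound[OF cdf_at_left])
  show "eventually (\<lambda>z. cdf M z \<le> g) (at_left (lower_quantile M g))"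
    using cdf_less_lower_quantile[OF assms] unfolding eventually_at_left_field
    by (intro exI[of _ "lower_quantile M g - 1"]) (auto intro: less_imp_le)
qed simp

lemma lower_quantile_mono:
  assumes "0 < g" "g \<le> h" "h < 1"
  shows "lower_quantile M g \<le> lower_quantile M h"
  unfolding lower_quantile_def
proof (rule cInf_superset_mono)
  show "{z. h \<le> cdf M z} \<noteq> {}" using cdf_ge_set_nonempty assms by simp
  show "bdd_below {z. g \<le> cdf M z}" using cdf_ge_set_bdd_below assms by simp
qed (use assms in auto)

lemma measure_lower_quantile_band_pos:
  assumes "0 < g'" "g' < g" "g < 1" "z < lower_quantile M g"
  shows "0 < measure M ({z<..lower_quantile M g} \<inter> {lower_quantile M g'..})"
proof -
  let ?q = "lower_quantile M g" and ?q' = "lower_quantile M g'"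
  define B where "B = {z<..?q} \<inter> {?q'..}"
  have "g \<le> cdf M ?q" using cdf_lower_quantile_ge assms by simp
  also have "\<dots> \<le> measure M B + max (cdf M z) (measure M {..<?q'})"
  proof (cases "?q' \<le> z")
    case True
    then have "{..?q} \<subseteq> B \<union> {..z}" by (auto simp: B_def)
    then have "cdf M ?q \<le> measure M (B \<union> {..z})"
      unfolding cdf_def by (intro finite_measure_mono) (auto simp: B_def)
    also have "\<dots> \<le> measure M B + cdf M z"
      unfolding cdf_def by (intro measure_subadditive) (auto simp: B_def emeasure_finite)
    finally show ?thesis by linarith
  next
    case False
    then have "{..?q} \<subseteq> B \<union> {..<?q'}" by (auto simp: B_def)
    then have "cdf M ?q \<le> measure M (B \<union> {..<?q'})"
      unfolding cdf_def by (intro finite_measure_mono) (auto simp: B_def)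
    also have "\<dots> \<le> measure M B + measure M {..<?q'}"
      by (intro measure_subadditive) (auto simp: B_def emeasure_finite)
    finally show ?thesis by linarith
  qed
  finally have "g \<le> measure M B + max (cdf M z) (measure M {..<?q'})" .
  moreover have "cdf M z < g" using cdf_less_lower_quantile assms by auto
  moreover have "measure M {..<?q'} < g"
    using measure_lessThan_lower_quantile[of g'] assms by simp
  ultimately show ?thesis unfolding B_def by linarith
qed

end

lemma loss_quantile_eq_lower_quantile:
  fixes f :: "'x \<Rightarrow> 'y \<Rightarrow> real" and Y :: "'w \<Rightarrow> 'y"
  assumes "prob_space M" "(\<lambda>\<omega>. f x (Y \<omega>)) \<in> borel_measurable M"
  shows "loss_quantile M Y f x \<gamma> = lower_quantile (distr M borel (\<lambda>\<omega>. f x (Y \<omega>))) \<gamma>"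
proof -
  interpret prob_space M by fact
  have "loss_cdf M Y f x z = cdf (distr M borel (\<lambda>\<omega>. f x (Y \<omega>))) z" for z
    using assms(2) unfolding loss_cdf_def cdf_def
    by (simp add: measure_distr vimage_def Int_def conj_commute)
  then show ?thesis unfolding loss_quantile_def lower_quantile_def by simp
qed

lemma loss_quantile_mono:
  fixes f :: "'x \<Rightarrow> 'y \<Rightarrow> real" and Y :: "'w \<Rightarrow> 'y"
  assumes "prob_space M" "(\<lambda>\<omega>. f x (Y \<omega>)) \<in> borel_measurable M"
    and "0 < \<beta>'" "\<beta>' \<le> \<beta>" "\<beta> < 1"
  shows "loss_quantile M Y f x \<beta>' \<le> loss_quantile M Y f x \<beta>"
proof -
  interpret prob_space M by fact
  interpret N: real_distribution "distr M borel (\<lambda>\<omega>. f x (Y \<omega>))"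
    using assms(2) by simp
  show ?thesis
    using N.lower_quantile_mono assms
    by (simp add: loss_quantile_eq_lower_quantile[where f=f and x=x and Y=Y, OF assms(1,2)])
qed

lemma measure_loss_band_pos:
  fixes f :: "'x \<Rightarrow> 'y \<Rightarrow> real" and Y :: "'w \<Rightarrow> 'y"
  assumes "prob_space M" "(\<lambda>\<omega>. f x (Y \<omega>)) \<in> borel_measurable M"
    and "0 < \<beta>'" "\<beta>' < \<beta>" "\<beta> < 1" "z' < loss_quantile M Y f x \<beta>"
  shows "0 < measure M {\<omega> \<in> space M. z' < f x (Y \<omega>) \<and> f x (Y \<omega>) \<le> loss_quantile M Y f x \<beta>
                                       \<and> loss_quantile M Y f x \<beta>' \<le> f x (Y \<omega>)}"
proof -
  interpret prob_space M by fact
  let ?N = "distr M borel (\<lambda>\<omega>. f x (Y \<omega>))"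
  interpret N: real_distribution ?N using assms(2) by simp
  have "0 < measure ?N ({z'<..lower_quantile ?N \<beta>} \<inter> {lower_quantile ?N \<beta>'..})"
    using N.measure_lower_quantile_band_pos assms
    by (simp add: loss_quantile_eq_lower_quantile[where f=f and x=x and Y=Y, OF assms(1,2)])
  then show ?thesis
    using assms(2)
    by (simp add: loss_quantile_eq_lower_quantile[where f=f and x=x and Y=Y, OF assms(1,2)]
        measure_distr vimage_def Int_def conj_commute conj_left_commute)
qed

lemma risk_region_set_antimono:
  assumes "prob_space M" "\<And>x. (\<lambda>\<omega>. f x (Y \<omega>)) \<in> borel_measurable M"
    and "0 < \<beta>'" "\<beta>' \<le> \<beta>" "\<beta> < 1"
  shows "risk_region_set M Y f X \<beta> \<subseteq> risk_region_set M Y f X \<beta>'"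
  using loss_quantile_mono[where f=f and Y=Y, OF assms(1,2) assms(3-5)] order_trans
  unfolding risk_region_set_def risk_region_def by fastforce

lemma measure_band_risk_region_set_pos:
  fixes f :: "'x \<Rightarrow> 'y \<Rightarrow> real" and Y :: "'w \<Rightarrow> 'y"
  assumes "prob_space M" "\<And>x. (\<lambda>\<omega>. f x (Y \<omega>)) \<in> borel_measurable M"
    and "{\<omega> \<in> space M. Y \<omega> \<in> risk_region_set M Y f X \<beta>'} \<in> sets M"
    and "0 < \<beta>'" "\<beta>' < \<beta>" "\<beta> < 1" "x \<in> X" "z' < loss_quantile M Y f x \<beta>"
  shows "0 < measure M {\<omega> \<in> space M. Y \<omega> \<in> {y. z' < f x y \<and> f x y \<le> loss_quantile M Y f x \<beta>}
                                       \<inter> risk_region_set M Y f X \<beta>'}"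
    (is "0 < measure M ?A")
proof -
  interpret prob_space M by fact
  let ?Q = "loss_quantile M Y f x \<beta>"
  have "{\<omega> \<in> space M. z' < f x (Y \<omega>) \<and> f x (Y \<omega>) \<le> ?Q} \<in> sets M"
    using assms(2)[of x] by measurable
  moreover have "?A = {\<omega> \<in> space M. z' < f x (Y \<omega>) \<and> f x (Y \<omega>) \<le> ?Q}
      \<inter> {\<omega> \<in> space M. Y \<omega> \<in> risk_region_set M Y f X \<beta>'}" by auto
  ultimately have "?A \<in> sets M" using assms(3) by simp
  have "0 < measure M {\<omega> \<in> space M. z' < f x (Y \<omega>) \<and> f x (Y \<omega>) \<le> ?Q
                                       \<and> loss_quantile M Y f x \<beta>' \<le> f x (Y \<omega>)}"
    using measure_loss_band_pos[where f=f and x=x and Y=Y, OF assms(1,2) assms(4-6,8)] .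
  also have "\<dots> \<le> measure M ?A"
    using \<open>?A \<in> sets M\<close> \<open>x \<in> X\<close>
    by (intro finite_measure_mono) (auto simp: risk_region_set_def risk_region_def)
  finally show ?thesis .
qed

lemma measure_closed_band_risk_region_set_pos:
  fixes f :: "'x \<Rightarrow> 'y \<Rightarrow> real" and Y :: "'w \<Rightarrow> 'y"
  assumes "prob_space M" "\<And>x. (\<lambda>\<omega>. f x (Y \<omega>)) \<in> borel_measurable M"
    and "{\<omega> \<in> space M. Y \<omega> \<in> risk_region_set M Y f X \<beta>'} \<in> sets M"
    and "0 < \<beta>'" "\<beta>' < \<beta>" "\<beta> < 1" "x \<in> X" "z' < loss_quantile M Y f x \<beta>"
  shows "0 < measure M {\<omega> \<in> space M. Y \<omega> \<in> {y. z' \<le> f x y \<and> f x y \<le> loss_quantile M Y f x \<beta>}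
                                       \<inter> risk_region_set M Y f X \<beta>'}"
    (is "0 < measure M ?A")
proof -
  interpret prob_space M by fact
  let ?Q = "loss_quantile M Y f x \<beta>"
  have "{\<omega> \<in> space M. z' \<le> f x (Y \<omega>) \<and> f x (Y \<omega>) \<le> ?Q} \<in> sets M"
    using assms(2)[of x] by measurable
  moreover have "?A = {\<omega> \<in> space M. z' \<le> f x (Y \<omega>) \<and> f x (Y \<omega>) \<le> ?Q}
      \<inter> {\<omega> \<in> space M. Y \<omega> \<in> risk_region_set M Y f X \<beta>'}" by auto
  ultimately have "?A \<in> sets M" using assms(3) by simp
  have "0 < measure M {\<omega> \<in> space M. Y \<omega> \<in> {y. z' < f x y \<and> f x y \<le> ?Q}
                                       \<inter> risk_region_set M Y f X \<beta>'}"
    using measure_band_risk_region_set_pos[OF assms] .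
  also have "\<dots> \<le> measure M ?A"
    using \<open>?A \<in> sets M\<close> by (intro finite_measure_mono) auto
  finally show ?thesis .
qed

theorem mainTheorem2:
  fixes M :: "'w measure"
    and Y :: "'w \<Rightarrow> real ^ 'd"
    and f :: "real ^ 'k \<Rightarrow> real ^ 'd \<Rightarrow> real"
    and X :: "(real ^ 'k) set"
    and \<beta> \<beta>' :: real
  assumes "prob_space M"
    and "Y \<in> borel_measurable M"
    and "\<And>x. (\<lambda>\<omega>. f x (Y \<omega>)) \<in> borel_measurable M"
    and "{\<omega> \<in> space M. Y \<omega> \<in> risk_region_set M Y f X \<beta>'} \<in> sets M"
    and "0 < \<beta>'" and "\<beta>' < \<beta>" and "\<beta> < 1"
  shows "aggregation_condition M Y f X \<beta> (risk_region_set M Y f X \<beta>') \<and>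
    (\<forall>x\<in>X. \<forall>z'. z' < loss_quantile M Y f x \<beta> \<longrightarrow>
       measure M {\<omega> \<in> space M. Y \<omega> \<in> {y. z' \<le> f x y \<and> f x y \<le> loss_quantile M Y f x \<beta>}
                                     \<inter> risk_region_set M Y f X \<beta>'} > 0)"
proof -
  have "risk_region_set M Y f X \<beta> \<subseteq> risk_region_set M Y f X \<beta>'"
    using risk_region_set_antimono[where f=f and Y=Y and X=X, OF assms(1,3)] assms(5-7) by simp
  then show ?thesis
    using measure_band_risk_region_set_pos[where f=f and Y=Y, OF assms(1,3,4,5,6,7)]
      measure_closed_band_risk_region_set_pos[where f=f and Y=Y, OF assms(1,3,4,5,6,7)]
    unfolding aggregation_condition_def by blast
qed

end
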